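(* Let $\overrightarrow{W}$ be a Morse sequence on a simplicial complex $K$. Then for every $p$, $\overline O[p]=\{c\in K[p]:\overline\Phi_p(c)=c\}$ and $\underline O[p]=\{c\in K[p]:\underline\Phi_p(c)=c\}$.
   Context: A simplicial complex $K$ is a finite collection of non-empty finite sets closed under taking non-empty subsets; $\dim\sigma=|\sigma|-1$, $K^{(p)}$ the set of $p$-simplices. A pair $(\sigma,\tau)$ with $\sigma\subsetneq\tau$ is a free pair for $K$ if $\tau$ is the only simplex other than $\sigma$ containing $\sigma$; $K$ is then an elementary expansion of $K\setminus\{\sigma,\tau\}$. If $\nu$ is a facet (maximal simplex) of $K$, $K$ is an elementary filling of $K\setminus\{\nu\}$. A Morse sequence on $K$ is a sequence $\langle\emptyset=K_0,\dots,K_k=K\rangle$ with each $K_i$ an elementary expansion or filling of $K_{i-1}$; simplices added by fillings are critical; for an expansion $K_i=K_{i-1}\cup\{\sigma,\tau\}$, $\sigma\subset\tau$, $(\sigma,\tau)$ is a regular pair, $\sigma$ lower regular, $\tau$ upper regular. $\widehat W$ is the set of critical simplices. $K[p]$ is the $\mathbb{Z}_2$-vector space of subsets of $K^{(p)}$ (sum = symmetric difference, $0=\emptyset$), $\widehat W[p]=\{c\in K[p]:c\subseteq\widehat W\}$. For $\sigma\in K^{(p)}$, $\partial(\sigma)=\{\tau\in K^{(p-1)}:\tau\subset\sigma\}$, $\delta(\sigma)=\{\tau\in K^{(p+1)}:\sigma\subset\tau\}$, with linear extensions $\partial_p,\delta_p$. The reference map $\curlywedge$ is the unique map assigning to each $p$-simplex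 an element of $\widehat W[p]$, extended linearly, with $\curlywedge(\nu)=\{\nu\}$ for critical $\nu$ and $\curlywedge(\tau)=0=\curlywedge(\partial(\tau))$ for upper regular $\tau$; the coreference map $\curlyvee$ is the unique such map with $\curlyvee(\nu)=\{\nu\}$ for critical $\nu$ and $\curlyvee(\sigma)=0=\curlyvee(\delta(\sigma))$ for lower regular $\sigma$. Extension maps: $\widetilde\curlywedge_p,\widetilde\curlyvee_p:\widehat W[p]\to K[p]$ linear with $\widetilde\curlywedge(\kappa)=\{\nu\in K:\kappa\in\curlyvee(\nu)\}$, $\widetilde\curlyvee(\kappa)=\{\nu\in K:\kappa\in\curlywedge(\nu)\}$ for critical $\kappa$; $\overline O[p]=\operatorname{im}\widetilde\curlywedge_p$, $\underline O[p]=\operatorname{im}\widetilde\curlyvee_p$. Let $V_p:K[p]\to K[p+1]$ and $V^*_p:K[p]\to K[p-1]$ be the linear maps with $V(\kappa)=V^*(\kappa)=0$ for critical $\kappa$, and $V(\sigma)=\tau$, $V(\tau)=0$, $V^*(\sigma)=0$, $V^*(\tau)=\sigma$ for each regular pair $(\sigma,\tau)$. The flow and coflow are the linear maps $\Phi_p(\nu)=\nu+\partial_{p+1}(V_p(\nu))+V_{p-1}(\partial_p(\nu))$ and $\Phi^*_p(\nu)=\nu+\delta_{p-1}(V^*_p(\nu))+V^*_{p+1}(\delta_p(\nu))$ for $\nu\in K^{(p)}$. For each $c\in K[p]$ there are $i,j\ge0$ with $\Phi^{i+1}(c)=\Phi^i(c)$ and $(\Phi^* )^{j+1}(c)=(\Phi^*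 )^j(c)$; $\overline\Phi_p(c)=\Phi^i(c)$ and $\underline\Phi_p(c)=(\Phi^* )^j(c)$. *)

theory Defs
  imports Main
begin

text \<open>Simplices are finite non-empty sets of vertices of type 'a; a complex is a set of simplices.
  Chains over Z2 of dimension p are subsets of the set of p-simplices (sum = symmetric difference).\<close>

definition simplicial_complex :: "'a set set \<Rightarrow> bool" where
  "simplicial_complex K \<longleftrightarrow> finite K \<and> (\<forall>s\<in>K. finite s \<and> s \<noteq> {}) \<and>
     (\<forall>s\<in>K. \<forall>t. t \<subseteq> s \<and> t \<noteq> {} \<longrightarrow> t \<in> K)"

text \<open>p-simplices: dim s = card s - 1.\<close>
definition simplices :: "'a set set \<Rightarrow> nat \<Rightarrow> 'a set set" where
  "simplices K p = {s \<in> K. card s = Suc p}"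

definition free_pair :: "'a set set \<Rightarrow> 'a set \<Rightarrow> 'a set \<Rightarrow> bool" where
  "free_pair K \<sigma> \<tau> \<longleftrightarrow> \<sigma> \<subset> \<tau> \<and> \<sigma> \<in> K \<and> \<tau> \<in> K \<and> (\<forall>\<nu>\<in>K. \<sigma> \<subseteq> \<nu> \<longrightarrow> \<nu> = \<sigma> \<or> \<nu> = \<tau>)"

definition facet :: "'a set set \<Rightarrow> 'a set \<Rightarrow> bool" where
  "facet K \<nu> \<longleftrightarrow> \<nu> \<in> K \<and> (\<forall>\<mu>\<in>K. \<nu> \<subseteq> \<mu> \<longrightarrow> \<mu> = \<nu>)"

text \<open>A step of a Morse sequence: an elementary filling (adding a facet) or an elementary
  expansion (adding a free pair).\<close>
datatype 'a step = Fill "'a set" | Expand "'a set" "'a set"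

fun step_set :: "'a step \<Rightarrow> 'a set set" where
  "step_set (Fill \<nu>) = {\<nu>}"
| "step_set (Expand \<sigma> \<tau>) = {\<sigma>, \<tau>}"

definition cplx :: "'a step list \<Rightarrow> nat \<Rightarrow> 'a set set" where
  "cplx W i = \<Union> (step_set ` set (take i W))"

definition morse_seq :: "'a set set \<Rightarrow> 'a step list \<Rightarrow> bool" where
  "morse_seq K W \<longleftrightarrow> cplx W (length W) = K \<and>
     (\<forall>i < length W. simplicial_complex (cplx W (Suc i)) \<and>
        (case W ! i of
           Fill \<nu> \<Rightarrow> facet (cplx W (Suc i)) \<nu> \<and> \<nu> \<notin> cplx W i
         | Expand \<sigma> \<tau> \<Rightarrow> free_pair (cplx W (Suc i)) \<sigma> \<tau> \<and> \<sigma> \<notin> cplx W i \<and> \<tau> \<notin> cplx W i))"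

definition crit :: "'a step list \<Rightarrow> 'a set set" where
  "crit W = {\<nu>. Fill \<nu> \<in> set W}"

definition lower_reg :: "'a step list \<Rightarrow> 'a set set" where
  "lower_reg W = {\<sigma>. \<exists>\<tau>. Expand \<sigma> \<tau> \<in> set W}"

definition upper_reg :: "'a step list \<Rightarrow> 'a set set" where
  "upper_reg W = {\<tau>. \<exists>\<sigma>. Expand \<sigma> \<tau> \<in> set W}"

text \<open>Linear (Z2) extension of a map from simplices to chains: sum = symmetric difference.\<close>
definition lin :: "('b \<Rightarrow> 'c set) \<Rightarrow> 'b set \<Rightarrow> 'c set" where
  "lin f c = {x. odd (card {s \<in> c. x \<in> f s})}"

definition bd :: "'a set set \<Rightarrow> 'a set \<Rightarrow> 'a set set" where
  "bd K \<sigma> = {\<tau> \<in> K. \<tau> \<subset> \<sigma> \<and> card \<tau> + 1 = card \<sigma>}"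

definition cobd :: "'a set set \<Rightarrow> 'a set \<Rightarrow> 'a set set" where
  "cobd K \<sigma> = {\<tau> \<in> K. \<sigma> \<subset> \<tau> \<and> card \<tau> = card \<sigma> + 1}"

text \<open>Reference map: the unique map with values in critical chains of the same dimension,
  identity on critical simplices, and vanishing on upper regular tau and on their boundaries.\<close>
definition is_ref_map :: "'a set set \<Rightarrow> 'a step list \<Rightarrow> ('a set \<Rightarrow> 'a set set) \<Rightarrow> bool" where
  "is_ref_map K W f \<longleftrightarrow> (\<forall>s. s \<notin> K \<longrightarrow> f s = {}) \<and>
     (\<forall>s\<in>K. f s \<subseteq> {\<nu> \<in> crit W. card \<nu> = card s}) \<and>
     (\<forall>\<nu>\<in>crit W. f \<nu> = {\<nu>}) \<and>
     (\<forall>\<tau>\<in>upper_reg W. f \<tau> = {} \<and> lin f (bd K \<tau>) = {})"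

definition ref_map :: "'a set set \<Rightarrow> 'a step list \<Rightarrow> 'a set \<Rightarrow> 'a set set" where
  "ref_map K W = (THE f. is_ref_map K W f)"

definition is_coref_map :: "'a set set \<Rightarrow> 'a step list \<Rightarrow> ('a set \<Rightarrow> 'a set set) \<Rightarrow> bool" where
  "is_coref_map K W f \<longleftrightarrow> (\<forall>s. s \<notin> K \<longrightarrow> f s = {}) \<and>
     (\<forall>s\<in>K. f s \<subseteq> {\<nu> \<in> crit W. card \<nu> = card s}) \<and>
     (\<forall>\<nu>\<in>crit W. f \<nu> = {\<nu>}) \<and>
     (\<forall>\<sigma>\<in>lower_reg W. f \<sigma> = {} \<and> lin f (cobd K \<sigma>) = {})"

definition coref_map :: "'a set set \<Rightarrow> 'a step list \<Rightarrow> 'a set \<Rightarrow> 'a set set" where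
  "coref_map K W = (THE f. is_coref_map K W f)"

definition ext_ref :: "'a set set \<Rightarrow> 'a step list \<Rightarrow> 'a set \<Rightarrow> 'a set set" where
  "ext_ref K W \<kappa> = {\<nu> \<in> K. \<kappa> \<in> coref_map K W \<nu>}"

definition ext_coref :: "'a set set \<Rightarrow> 'a step list \<Rightarrow> 'a set \<Rightarrow> 'a set set" where
  "ext_coref K W \<kappa> = {\<nu> \<in> K. \<kappa> \<in> ref_map K W \<nu>}"

definition O_over :: "'a set set \<Rightarrow> 'a step list \<Rightarrow> nat \<Rightarrow> 'a set set set" where
  "O_over K W p = lin (ext_ref K W) ` Pow (crit W \<inter> simplices K p)"

definition O_under :: "'a set set \<Rightarrow> 'a step list \<Rightarrow> nat \<Rightarrow> 'a set set set" where
  "O_under K W p = lin (ext_coref K W) ` Pow (crit W \<inter> simplices K p)"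

definition symd :: "'b set \<Rightarrow> 'b set \<Rightarrow> 'b set" where
  "symd A B = (A - B) \<union> (B - A)"

definition Vf :: "'a step list \<Rightarrow> 'a set \<Rightarrow> 'a set set" where
  "Vf W \<sigma> = {\<tau>. Expand \<sigma> \<tau> \<in> set W}"

definition Vs :: "'a step list \<Rightarrow> 'a set \<Rightarrow> 'a set set" where
  "Vs W \<tau> = {\<sigma>. Expand \<sigma> \<tau> \<in> set W}"

definition flow :: "'a set set \<Rightarrow> 'a step list \<Rightarrow> 'a set set \<Rightarrow> 'a set set" where
  "flow K W = lin (\<lambda>\<nu>. symd (symd {\<nu>} (lin (bd K) (Vf W \<nu>))) (lin (Vf W) (bd K \<nu>)))"

definition coflow :: "'a set set \<Rightarrow> 'a step list \<Rightarrow> 'a set set \<Rightarrow> 'a set set" where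
  "coflow K W = lin (\<lambda>\<nu>. symd (symd {\<nu>} (lin (cobd K) (Vs W \<nu>))) (lin (Vs W) (cobd K \<nu>)))"

definition flow_bar :: "'a set set \<Rightarrow> 'a step list \<Rightarrow> 'a set set \<Rightarrow> 'a set set" where
  "flow_bar K W c = (flow K W ^^ (LEAST i. (flow K W ^^ Suc i) c = (flow K W ^^ i) c)) c"

definition coflow_bar :: "'a set set \<Rightarrow> 'a step list \<Rightarrow> 'a set set \<Rightarrow> 'a set set" where
  "coflow_bar K W c = (coflow K W ^^ (LEAST i. (coflow K W ^^ Suc i) c = (coflow K W ^^ i) c)) c"

end

theory Submission
  imports Defs
begin

text \<open>
  Flow and coflow are two instances of one situation: finitely many cells with a boundary
  incidence \<open>d\<close>, its transpose \<open>d'\<close> and a matching \<open>P\<close> of regular pairs, filtered by a rank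
  (the index of the Morse step) along which faces never rise, and stay level exactly on matched
  pairs. Transposing \<open>d\<close> and \<open>P\<close> and reversing the rank exchanges flow and coflow, reference and
  coreference map, so only the flow \<open>\<Phi>\<close> needs to be treated.

  With respect to the rank, \<open>\<Phi>\<close> is the projection onto the critical cells plus a strictly
  lowering part. Hence a \<open>\<Phi>\<close>-fixed chain without critical cells vanishes, the iterates of \<open>\<Phi>\<close>
  stabilise, and the defining equations of a reference map determine it by recursion on the rank.
  The coreference map \<open>h\<close> is invariant under the transpose of \<open>\<Phi>\<close>, so the extension
  \<open>{\<nu>. \<kappa> \<in> h \<nu>}\<close> of a critical cell \<open>\<kappa>\<close> is \<open>\<Phi>\<close>-fixed; conversely a fixed chain minus the
  extension of its critical part is fixed and has no critical cells, so it vanishes.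
\<close>

section \<open>Chains modulo two\<close>

lemma symd_iff [simp]: "x \<in> symd A B \<longleftrightarrow> (x \<in> A) \<noteq> (x \<in> B)"
  by (auto simp: symd_def)

lemma symd_empty_right [simp]: "symd A {} = A"
  by (simp add: symd_def)

lemma symd_eq_empty_iff: "symd A B = {} \<longleftrightarrow> A = B"
  by (auto simp: symd_def)

lemma odd_card_symd:
  assumes "finite A" "finite B"
  shows "odd (card (symd A B)) \<longleftrightarrow> odd (card A) \<noteq> odd (card B)"
proof -
  have "card (A \<union> B - A \<inter> B) = card (A \<union> B) - card (A \<inter> B)"
    using assms by (intro card_Diff_subset) auto
  moreover have "card (A \<inter> B) \<le> card (A \<union> B)"
    using assms by (intro card_mono) auto
  moreover have "card (A \<union> B) + card (A \<inter> B) = card A + card B"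
    using assms by (rule card_Un_Int[symmetric])
  ultimately have "card (A \<union> B - A \<inter> B) + 2 * card (A \<inter> B) = card A + card B"
    by linarith
  moreover have "symd A B = A \<union> B - A \<inter> B"
    by auto
  ultimately show ?thesis
    by (metis even_add even_mult_iff even_numeral)
qed

lemma lin_empty [simp]: "lin f {} = {}"
  by (simp add: lin_def)

lemma lin_singleton [simp]: "lin f {a} = f a"
proof -
  have "{s \<in> {a}. x \<in> f s} = (if x \<in> f a then {a} else {})" for x
    by auto
  then show ?thesis
    by (auto simp: lin_def)
qed

lemma lin_singletons: "lin (\<lambda>s. {s}) c = c"
proof -
  have "{s \<in> c. x \<in> {s}} = (if x \<in> c then {x} else {})" for x
    by auto
  then show ?thesis
    by (auto simp: lin_def)
qed

lemma lin_subset_UN: "lin f c \<subseteq> (\<Union>s\<in>c. f s)"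
proof
  fix x
  assume "x \<in> lin f c"
  then have "odd (card {s \<in> c. x \<in> f s})"
    by (simp add: lin_def)
  then have "{s \<in> c. x \<in> f s} \<noteq> {}"
    by (intro notI) simp
  then show "x \<in> (\<Union>s\<in>c. f s)"
    by auto
qed

lemma lin_cong:
  assumes "\<And>s. s \<in> c \<Longrightarrow> f s = g s"
  shows "lin f c = lin g c"
proof -
  have "{s \<in> c. x \<in> f s} = {s \<in> c. x \<in> g s}" for x
    using assms by auto
  then show ?thesis
    by (simp add: lin_def)
qed

lemma lin_zero: "(\<And>s. s \<in> c \<Longrightarrow> f s = {}) \<Longrightarrow> lin f c = {}"
  using lin_subset_UN[of f c] by blast

lemma lin_symd:
  assumes "finite a" "finite b"
  shows "lin f (symd a b) = symd (lin f a) (lin f b)"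
proof -
  have "{s \<in> symd a b. x \<in> f s} = symd {s \<in> a. x \<in> f s} {s \<in> b. x \<in> f s}" for x
    by auto
  then show ?thesis
    using assms by (auto simp: lin_def odd_card_symd)
qed

lemma lin_symd_fun:
  assumes "finite c"
  shows "lin (\<lambda>s. symd (f s) (g s)) c = symd (lin f c) (lin g c)"
proof -
  have "{s \<in> c. x \<in> symd (f s) (g s)} = symd {s \<in> c. x \<in> f s} {s \<in> c. x \<in> g s}" for x
    by auto
  then show ?thesis
    using assms by (auto simp: lin_def odd_card_symd)
qed

lemma lin_remove:
  assumes "finite c" "a \<in> c"
  shows "lin f c = symd (f a) (lin f (c - {a}))"
proof -
  have "c = symd {a} (c - {a})"
    using assms(2) by auto
  then show ?thesis
    using lin_symd[of "{a}" "c - {a}" f] assms(1) by simp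
qed

lemma lin_insert:
  assumes "finite c" "a \<notin> c"
  shows "lin f (insert a c) = symd (f a) (lin f c)"
  using lin_remove[of "insert a c" a f] assms by simp

lemma lin_lin:
  assumes "finite c" "\<And>s. s \<in> c \<Longrightarrow> finite (g s)"
  shows "lin f (lin g c) = lin (\<lambda>s. lin f (g s)) c"
  using assms
proof (induction c rule: finite_induct)
  case empty
  then show ?case
    by simp
next
  case (insert a c)
  have "finite (lin g c)"
    using insert lin_subset_UN[of g c] by (meson finite_UN_I finite_subset insertCI)
  then have "lin f (lin g (insert a c)) = symd (lin f (g a)) (lin f (lin g c))"
    using insert by (simp add: lin_insert lin_symd)
  then show ?case
    using insert by (simp add: lin_insert)
qed

lemma lin_transpose: "x \<in> lin g {\<nu> \<in> K. \<kappa> \<in> h \<nu>} \<longleftrightarrow> \<kappa> \<in> lin h {\<nu> \<in> K. x \<in> g \<nu>}"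
proof -
  have "{s \<in> {\<nu> \<in> K. \<kappa> \<in> h \<nu>}. x \<in> g s} = {s \<in> {\<nu> \<in> K. x \<in> g \<nu>}. \<kappa> \<in> h s}"
    by auto
  then show ?thesis
    by (simp add: lin_def)
qed

lemma lin_Image:
  assumes "single_valued (P\<inverse>)"
  shows "lin (\<lambda>\<sigma>. P `` {\<sigma>}) A = P `` A"
proof -
  have "odd (card {s \<in> A. (s, x) \<in> P}) \<longleftrightarrow> (\<exists>s\<in>A. (s, x) \<in> P)" for x
  proof (cases "\<exists>s\<in>A. (s, x) \<in> P")
    case True
    then obtain s where "s \<in> A" "(s, x) \<in> P"
      by blast
    then have "{s \<in> A. (s, x) \<in> P} = {s}"
      using assms by (auto dest: single_valuedD)
    then show ?thesis
      using True by simp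
  next
    case False
    then have "card {s \<in> A. (s, x) \<in> P} = 0"
      by (simp add: card_eq_0_iff)
    then show ?thesis
      using False by simp
  qed
  then show ?thesis
    by (auto simp: lin_def)
qed

text \<open>\<open>LEAST\<close> of an unsatisfiable predicate is an unspecified number, hence the assumption that
  some iterate is stable.\<close>

lemma funpow_stabilized_eq_iff:
  assumes "(F ^^ Suc i) x = (F ^^ i) x"
  shows "(F ^^ (LEAST i. (F ^^ Suc i) x = (F ^^ i) x)) x = x \<longleftrightarrow> F x = x"
proof
  let ?l = "LEAST i. (F ^^ Suc i) x = (F ^^ i) x"
  assume l: "(F ^^ ?l) x = x"
  have "(F ^^ Suc ?l) x = (F ^^ ?l) x"
    using assms by (rule LeastI)
  then show "F x = x"
    using l by simp
next
  assume "F x = x"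
  then have "(LEAST i. (F ^^ Suc i) x = (F ^^ i) x) = 0"
    by (simp add: Least_eq_0)
  then show "(F ^^ (LEAST i. (F ^^ Suc i) x = (F ^^ i) x)) x = x"
    by simp
qed

lemma ex1_fixpoint_adm_wf:
  assumes "wf R" "adm_wf R F"
  shows "\<exists>!f. f = F f"
proof
  show "wfrec R F = F (wfrec R F)"
    using assms by (rule wfrec_fixpoint)
next
  fix g
  assume g: "g = F g"
  show "g = wfrec R F"
  proof
    fix x
    show "g x = wfrec R F x"
      using \<open>wf R\<close>
    proof (induction x rule: wf_induct_rule)
      case (less x)
      then have "F g x = F (wfrec R F) x"
        using \<open>adm_wf R F\<close> by (auto simp: adm_wf_def)
      then show ?case
        using g wfrec_fixpoint[OF assms] by metis
    qed
  qed
qed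

section \<open>Gradients filtered by a rank\<close>

definition gradient_flow :: "('b \<Rightarrow> 'b set) \<Rightarrow> ('b \<times> 'b) set \<Rightarrow> 'b set \<Rightarrow> 'b set" where
  "gradient_flow d P =
     lin (\<lambda>\<nu>. symd (symd {\<nu>} (lin d (P `` {\<nu>}))) (lin (\<lambda>\<sigma>. P `` {\<sigma>}) (d \<nu>)))"

definition reference_map ::
  "'b set \<Rightarrow> ('b \<Rightarrow> 'b set) \<Rightarrow> ('b \<times> 'b) set \<Rightarrow> 'b set \<Rightarrow> ('b \<Rightarrow> nat) \<Rightarrow> ('b \<Rightarrow> 'b set) \<Rightarrow> bool"
where
  "reference_map K d P C dim f \<longleftrightarrow> (\<forall>s. s \<notin> K \<longrightarrow> f s = {}) \<and>
     (\<forall>s\<in>K. f s \<subseteq> {\<nu> \<in> C. dim \<nu> = dim s}) \<and> (\<forall>\<nu>\<in>C. f \<nu> = {\<nu>}) \<and>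
     (\<forall>\<tau>\<in>Range P. f \<tau> = {} \<and> lin f (d \<tau>) = {})"

text \<open>The rank \<open>r\<close> plays the part of the step index
  of a Morse sequence: faces never have larger rank, and equal rank only within a pair, which makes
  the matching acyclic. \<open>dim\<close> is only needed to keep reference maps dimension-preserving.\<close>

locale discrete_gradient =
  fixes K :: "'b set" and d d' :: "'b \<Rightarrow> 'b set" and P :: "('b \<times> 'b) set" and C :: "'b set"
    and r dim :: "'b \<Rightarrow> nat"
  assumes finite_K: "finite K"
    and d_subset: "d \<nu> \<subseteq> K" and d'_subset: "d' \<nu> \<subseteq> K"
    and d'_iff: "\<nu> \<in> K \<Longrightarrow> t \<in> K \<Longrightarrow> \<nu> \<in> d' t \<longleftrightarrow> t \<in> d \<nu>"
    and dim_d: "t \<in> d \<nu> \<Longrightarrow> t' \<in> d \<nu> \<Longrightarrow> dim t = dim t'"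
    and dim_d': "t \<in> d' \<nu> \<Longrightarrow> t' \<in> d' \<nu> \<Longrightarrow> dim t = dim t'"
    and pair_in_d: "(\<sigma>, \<tau>) \<in> P \<Longrightarrow> \<sigma> \<in> d \<tau>"
    and single_valued_P: "single_valued P"
    and single_valued_converse_P: "single_valued (P\<inverse>)"
    and K_eq: "K = C \<union> Domain P \<union> Range P"
    and disjoint: "C \<inter> Domain P = {}" "C \<inter> Range P = {}" "Domain P \<inter> Range P = {}"
    and rank_d: "\<nu> \<in> K \<Longrightarrow> t \<in> d \<nu> \<Longrightarrow> r t \<le> r \<nu>"
    and rank_d_eq: "\<nu> \<in> K \<Longrightarrow> t \<in> d \<nu> \<Longrightarrow> r t = r \<nu> \<Longrightarrow> (t, \<nu>) \<in> P"
    and rank_pair: "(\<sigma>, \<tau>) \<in> P \<Longrightarrow> r \<sigma> = r \<tau>"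
begin

lemma finite_chain: "c \<subseteq> K \<Longrightarrow> finite c"
  using finite_K finite_subset by blast

lemma C_subset_K: "C \<subseteq> K" and Domain_subset_K: "Domain P \<subseteq> K" and Range_subset_K: "Range P \<subseteq> K"
  using K_eq by blast+

lemma pair_Image: "(\<sigma>, \<tau>) \<in> P \<Longrightarrow> P `` {\<sigma>} = {\<tau>}"
  using single_valued_P single_valuedD by fastforce

lemma pair_Image_converse: "(\<sigma>, \<tau>) \<in> P \<Longrightarrow> P\<inverse> `` {\<tau>} = {\<sigma>}"
  using single_valued_converse_P single_valuedD by fastforce

lemma Image_not_Domain: "\<sigma> \<notin> Domain P \<Longrightarrow> P `` {\<sigma>} = {}"
  by blast

lemma rank_other_face:
  assumes "(\<sigma>, \<tau>) \<in> P" "t \<in> d \<tau>" "t \<noteq> \<sigma>"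
  shows "r t < r \<sigma>"
proof -
  have "\<tau> \<in> K"
    using assms(1) Range_subset_K by blast
  have "(t, \<tau>) \<notin> P"
    using assms(1,3) pair_Image_converse by blast
  then have "r t \<noteq> r \<tau>"
    using rank_d_eq assms(2) \<open>\<tau> \<in> K\<close> by blast
  then show ?thesis
    using rank_d[OF \<open>\<tau> \<in> K\<close> assms(2)] rank_pair[OF assms(1)] by simp
qed

lemma dual:
  assumes "\<And>s. s \<in> K \<Longrightarrow> r s \<le> n"
  shows "discrete_gradient K d' d (P\<inverse>) C (\<lambda>s. n - r s) dim"
proof
  fix \<sigma> \<tau>
  assume "(\<sigma>, \<tau>) \<in> P\<inverse>"
  then show "\<sigma> \<in> d' \<tau>"
    using pair_in_d d_subset d'_iff K_eq by blast
  show "n - r \<sigma> = n - r \<tau>"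
    using \<open>(\<sigma>, \<tau>) \<in> P\<inverse>\<close> rank_pair by simp
next
  fix \<nu> t
  assume \<nu>: "\<nu> \<in> K" and t: "t \<in> d' \<nu>"
  then have "t \<in> K" "\<nu> \<in> d t"
    using d'_subset d'_iff by blast+
  then show "n - r t \<le> n - r \<nu>"
    using rank_d by (simp add: diff_le_mono2)
  assume "n - r t = n - r \<nu>"
  moreover have "r t \<le> n" "r \<nu> \<le> n"
    using assms \<nu> \<open>t \<in> K\<close> by blast+
  ultimately have "r t = r \<nu>"
    by (metis diff_diff_cancel)
  then show "(t, \<nu>) \<in> P\<inverse>"
    using rank_d_eq \<open>t \<in> K\<close> \<open>\<nu> \<in> d t\<close> by simp
next
  show "K = C \<union> Domain (P\<inverse>) \<union> Range (P\<inverse>)"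
    using K_eq by auto
  show "C \<inter> Domain (P\<inverse>) = {}" "C \<inter> Range (P\<inverse>) = {}" "Domain (P\<inverse>) \<inter> Range (P\<inverse>) = {}"
    using disjoint by auto
  show "single_valued (P\<inverse>)" "single_valued ((P\<inverse>)\<inverse>)"
    using single_valued_P single_valued_converse_P by simp_all
next
  show "\<nu> \<in> d t \<longleftrightarrow> t \<in> d' \<nu>" if "\<nu> \<in> K" "t \<in> K" for \<nu> t
    using d'_iff that by blast
qed (use finite_K d_subset d'_subset dim_d dim_d' in blast)+

lemma finite_d: "finite (d \<nu>)"
  using d_subset finite_chain by blast

text \<open>For a pair \<open>(\<sigma>, \<tau>)\<close>, the equation \<open>lin f (d \<tau>) = {}\<close> determines \<open>f \<sigma>\<close> from the values of \<open>f\<close>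
  on the other faces of \<open>\<tau>\<close>, which have smaller rank.\<close>

definition reference_step :: "('b \<Rightarrow> 'b set) \<Rightarrow> 'b \<Rightarrow> 'b set" where
  "reference_step f s = (if s \<in> C then {s} else lin f (lin d (P `` {s}) - {s}))"

lemma reference_step_pair: "(\<sigma>, \<tau>) \<in> P \<Longrightarrow> reference_step f \<sigma> = lin f (d \<tau> - {\<sigma>})"
  using disjoint(1) pair_Image by (auto simp: reference_step_def)

lemma reference_step_unpaired: "s \<notin> C \<Longrightarrow> s \<notin> Domain P \<Longrightarrow> reference_step f s = {}"
  by (simp add: reference_step_def Image_not_Domain)

lemma adm_wf_reference_step: "adm_wf (measure r) reference_step"
proof -
  have "reference_step f s = reference_step g s"
    if fg: "\<forall>t. (t, s) \<in> measure r \<longrightarrow> f t = g t" for f g s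
  proof (cases "s \<in> Domain P")
    case True
    then obtain \<tau> where \<tau>: "(s, \<tau>) \<in> P"
      by blast
    have "lin f (d \<tau> - {s}) = lin g (d \<tau> - {s})"
      using fg rank_other_face[OF \<tau>] by (intro lin_cong) simp
    then show ?thesis
      using \<tau> by (simp add: reference_step_pair)
  next
    case False
    then show ?thesis
      by (cases "s \<in> C") (simp_all add: reference_step_unpaired, simp add: reference_step_def)
  qed
  then show ?thesis
    unfolding adm_wf_def by blast
qed

lemma reference_step_fixpoint_dim:
  assumes f: "f = reference_step f" and "s \<in> K"
  shows "f s \<subseteq> {\<nu> \<in> C. dim \<nu> = dim s}"
  using \<open>s \<in> K\<close>
proof (induction "r s" arbitrary: s rule: less_induct)
  case less
  have fs: "f s = reference_step f s"
    using f by (rule fun_cong)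
  show ?case
  proof (cases "s \<in> Domain P")
    case True
    then obtain \<tau> where \<tau>: "(s, \<tau>) \<in> P"
      by blast
    have "f t \<subseteq> {\<nu> \<in> C. dim \<nu> = dim s}" if "t \<in> d \<tau> - {s}" for t
    proof -
      have "dim t = dim s"
        using that pair_in_d[OF \<tau>] dim_d by blast
      then show ?thesis
        using less.hyps[of t] that rank_other_face[OF \<tau>] d_subset by auto
    qed
    then have "lin f (d \<tau> - {s}) \<subseteq> {\<nu> \<in> C. dim \<nu> = dim s}"
      using lin_subset_UN[of f "d \<tau> - {s}"] by blast
    then show ?thesis
      using fs by (simp add: reference_step_pair[OF \<tau>])
  next
    case False
    then show ?thesis
      using fs
      by (cases "s \<in> C") (simp_all add: reference_step_unpaired, simp add: reference_step_def)
  qed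
qed

lemma reference_map_fixpoint:
  assumes f: "reference_map K d P C dim f"
  shows "f = reference_step f"
proof
  fix s
  consider "s \<in> C" | \<tau> where "(s, \<tau>) \<in> P" | "s \<notin> C" "s \<notin> Domain P"
    by blast
  then show "f s = reference_step f s"
  proof cases
    case 1
    then show ?thesis
      using f by (simp add: reference_map_def reference_step_def)
  next
    case (2 \<tau>)
    then have "lin f (d \<tau>) = {}"
      using f by (auto simp: reference_map_def)
    then have "symd (f s) (lin f (d \<tau> - {s})) = {}"
      using lin_remove[OF finite_d pair_in_d[OF 2], of f] by simp
    then show ?thesis
      using 2 by (simp add: symd_eq_empty_iff reference_step_pair)
  next
    case 3
    then have "s \<notin> K \<or> s \<in> Range P"
      using K_eq by blast
    then show ?thesis
      using f 3 by (auto simp: reference_map_def reference_step_unpaired)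
  qed
qed

lemma fixpoint_reference_map:
  assumes f: "f = reference_step f"
  shows "reference_map K d P C dim f"
proof -
  have fs: "f s = reference_step f s" for s
    using f by (rule fun_cong)
  have unpaired: "f s = {}" if "s \<notin> C" "s \<notin> Domain P" for s
    using fs that by (simp add: reference_step_unpaired)
  have paired: "lin f (d \<tau>) = {}" if "(\<sigma>, \<tau>) \<in> P" for \<sigma> \<tau>
    using lin_remove[OF finite_d pair_in_d[OF that], of f] fs[of \<sigma>]
    by (simp add: reference_step_pair[OF that] symd_eq_empty_iff)
  show ?thesis
    unfolding reference_map_def
  proof (intro conjI ballI allI impI)
    show "f s = {}" if "s \<notin> K" for s
      using unpaired that K_eq by blast
    show "f s \<subseteq> {\<nu> \<in> C. dim \<nu> = dim s}" if "s \<in> K" for s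
      using reference_step_fixpoint_dim[OF f that] .
    show "f \<nu> = {\<nu>}" if "\<nu> \<in> C" for \<nu>
      using fs[of \<nu>] that by (simp add: reference_step_def)
    show "f \<tau> = {}" if "\<tau> \<in> Range P" for \<tau>
      using unpaired that disjoint by blast
    show "lin f (d \<tau>) = {}" if "\<tau> \<in> Range P" for \<tau>
      using paired that by blast
  qed
qed

lemma ex1_reference_map: "\<exists>!f. reference_map K d P C dim f"
proof -
  have "reference_map K d P C dim f \<longleftrightarrow> f = reference_step f" for f
    using reference_map_fixpoint fixpoint_reference_map by blast
  then show ?thesis
    using ex1_fixpoint_adm_wf[OF wf_measure adm_wf_reference_step] by simp
qed

definition flow_cell :: "'b \<Rightarrow> 'b set" where
  "flow_cell \<nu> = symd (symd {\<nu>} (lin d (P `` {\<nu>}))) (P `` d \<nu>)"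

lemma gradient_flow_eq: "gradient_flow d P = lin flow_cell"
  unfolding gradient_flow_def flow_cell_def lin_Image[OF single_valued_converse_P] ..

lemma flow_cell_diagonal:
  assumes "\<nu> \<in> K"
  shows "\<nu> \<in> flow_cell \<nu> \<longleftrightarrow> \<nu> \<in> C"
proof -
  have "\<nu> \<in> lin d (P `` {\<nu>}) \<longleftrightarrow> \<nu> \<in> Domain P"
    using pair_Image pair_in_d by (cases "\<nu> \<in> Domain P") (auto simp: Image_not_Domain)
  moreover have "\<nu> \<in> P `` d \<nu> \<longleftrightarrow> \<nu> \<in> Range P"
    using pair_in_d by blast
  ultimately show ?thesis
    using assms K_eq disjoint by (auto simp: flow_cell_def)
qed

lemma flow_cell_below:
  assumes \<nu>: "\<nu> \<in> K" and y: "y \<in> flow_cell \<nu>" "y \<noteq> \<nu>"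
  shows "y \<in> K \<and> r y < r \<nu>"
proof -
  consider "y \<in> lin d (P `` {\<nu>})" | "y \<in> P `` d \<nu>"
    using y by (auto simp: flow_cell_def)
  then show ?thesis
  proof cases
    case 1
    then obtain \<tau> where \<tau>: "(\<nu>, \<tau>) \<in> P"
      by (cases "\<nu> \<in> Domain P") (auto simp: Image_not_Domain)
    then have "y \<in> d \<tau>"
      using 1 by (simp add: pair_Image)
    then show ?thesis
      using d_subset rank_other_face[OF \<tau> _ y(2)] by blast
  next
    case 2
    then obtain t where t: "t \<in> d \<nu>" "(t, y) \<in> P"
      by blast
    then have "(t, \<nu>) \<notin> P"
      using y(2) pair_Image by blast
    then have "r t < r \<nu>"
      using rank_d[OF \<nu> t(1)] rank_d_eq[OF \<nu> t(1)] le_neq_implies_less by blast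
    moreover have "y \<in> K"
      using t(2) K_eq by blast
    ultimately show ?thesis
      using rank_pair[OF t(2)] by simp
  qed
qed

lemma flow_cell_upper: "\<nu> \<notin> Domain P \<Longrightarrow> y \<in> flow_cell \<nu> \<Longrightarrow> y \<noteq> \<nu> \<Longrightarrow> y \<in> Range P"
  by (auto simp: flow_cell_def Image_not_Domain)

lemma flow_subset: "c \<subseteq> K \<Longrightarrow> lin flow_cell c \<subseteq> K"
  using lin_subset_UN[of flow_cell c] flow_cell_below by blast

lemma funpow_flow_subset: "c \<subseteq> K \<Longrightarrow> (lin flow_cell ^^ k) c \<subseteq> K"
  by (induction k) (simp_all add: flow_subset)

lemma funpow_flow_symd:
  assumes "a \<subseteq> K" "b \<subseteq> K"
  shows "(lin flow_cell ^^ k) (symd a b) = symd ((lin flow_cell ^^ k) a) ((lin flow_cell ^^ k) b)"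
proof (induction k)
  case (Suc k)
  have "finite ((lin flow_cell ^^ k) a)" "finite ((lin flow_cell ^^ k) b)"
    using finite_chain[OF funpow_flow_subset] assms by blast+
  then show ?case
    using Suc.IH by (simp add: lin_symd)
qed simp

lemma flow_critical_chain:
  assumes "c \<subseteq> C"
  shows "lin flow_cell c = symd c (lin (\<lambda>\<nu>. flow_cell \<nu> - {\<nu>}) c)"
proof -
  have "flow_cell \<nu> = symd {\<nu>} (flow_cell \<nu> - {\<nu>})" if "\<nu> \<in> c" for \<nu>
  proof -
    have "\<nu> \<in> flow_cell \<nu>"
      using that assms flow_cell_diagonal C_subset_K by blast
    then show ?thesis
      by auto
  qed
  then have "lin flow_cell c = lin (\<lambda>\<nu>. symd {\<nu>} (flow_cell \<nu> - {\<nu>})) c"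
    by (rule lin_cong)
  also have "\<dots> = symd (lin (\<lambda>\<nu>. {\<nu>}) c) (lin (\<lambda>\<nu>. flow_cell \<nu> - {\<nu>}) c)"
    using assms C_subset_K by (intro lin_symd_fun finite_chain) blast
  finally show ?thesis
    by (simp only: lin_singletons)
qed

lemma flow_fixed_chain_without_critical:
  assumes c: "c \<subseteq> K" "lin flow_cell c = c" and "c \<inter> C = {}"
  shows "c = {}"
proof (rule ccontr)
  assume "c \<noteq> {}"
  have "finite c"
    using c(1) by (rule finite_chain)
  then have "Max (r ` c) \<in> r ` c"
    using \<open>c \<noteq> {}\<close> by simp
  then obtain \<nu> where \<nu>: "\<nu> \<in> c" "r \<nu> = Max (r ` c)"
    by (metis imageE)
  then have "\<nu> \<in> lin flow_cell c"
    using c(2) by simp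
  then obtain \<mu> where \<mu>: "\<mu> \<in> c" "\<nu> \<in> flow_cell \<mu>"
    using lin_subset_UN[of flow_cell c] by blast
  have "\<mu> \<in> K" "\<mu> \<notin> C"
    using \<mu>(1) c(1) \<open>c \<inter> C = {}\<close> by blast+
  show False
  proof (cases "\<mu> = \<nu>")
    case True
    then show False
      using \<mu>(2) flow_cell_diagonal[OF \<open>\<mu> \<in> K\<close>] \<open>\<mu> \<notin> C\<close> by simp
  next
    case False
    then have "r \<nu> < r \<mu>"
      using flow_cell_below[OF \<open>\<mu> \<in> K\<close> \<mu>(2)] by simp
    moreover have "r \<mu> \<le> Max (r ` c)"
      using \<mu>(1) \<open>finite c\<close> by simp
    ultimately show False
      using \<nu>(2) by simp
  qed
qed

lemma flow_cell_regular: "\<nu> \<in> K \<Longrightarrow> \<nu> \<notin> C \<Longrightarrow> y \<in> flow_cell \<nu> \<Longrightarrow> y \<in> K \<and> r y < r \<nu>"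
  using flow_cell_diagonal flow_cell_below by blast

lemma flow_nilpotent_upper:
  assumes "c \<subseteq> Range P" "\<forall>x\<in>c. r x < n"
  shows "(lin flow_cell ^^ n) c = {}"
  using assms
proof (induction n arbitrary: c)
  case 0
  then show ?case
    by auto
next
  case (Suc n)
  have "y \<in> Range P \<and> r y < n" if y: "y \<in> lin flow_cell c" for y
  proof -
    obtain u where u: "u \<in> c" "y \<in> flow_cell u"
      using y lin_subset_UN[of flow_cell c] by blast
    have "u \<in> K" "u \<notin> C" "u \<notin> Domain P"
      using u(1) Suc.prems(1) Range_subset_K disjoint by blast+
    then have "y \<in> Range P" "r y < r u"
      using flow_cell_upper flow_cell_regular u(2) flow_cell_diagonal by blast+
    then show ?thesis
      using Suc.prems(2) u(1) by fastforce
  qed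
  then have "(lin flow_cell ^^ n) (lin flow_cell c) = {}"
    by (intro Suc.IH) auto
  then show ?case
    by (simp add: funpow_Suc_right del: funpow.simps)
qed

lemma flow_critical_stabilizes:
  assumes "c \<subseteq> C" "\<forall>x\<in>c. r x < n"
  shows "(lin flow_cell ^^ Suc n) c = (lin flow_cell ^^ n) c"
proof -
  let ?\<Phi> = "lin flow_cell"
  define u where "u = lin (\<lambda>\<nu>. flow_cell \<nu> - {\<nu>}) c"
  have "y \<in> Range P \<and> r y < n" if \<nu>: "\<nu> \<in> c" and y: "y \<in> flow_cell \<nu> - {\<nu>}" for \<nu> y
  proof -
    have "\<nu> \<in> K" "\<nu> \<notin> Domain P"
      using \<nu> assms(1) C_subset_K disjoint by blast+
    then have "y \<in> Range P" "r y < r \<nu>"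
      using y flow_cell_upper flow_cell_below by blast+
    then show ?thesis
      using \<nu> assms(2) by fastforce
  qed
  then have u: "u \<subseteq> Range P" "\<forall>x\<in>u. r x < n"
    using lin_subset_UN[of "\<lambda>\<nu>. flow_cell \<nu> - {\<nu>}" c] unfolding u_def by blast+
  have "c \<subseteq> K" "u \<subseteq> K"
    using assms(1) u(1) C_subset_K Range_subset_K by blast+
  have "(?\<Phi> ^^ Suc n) c = (?\<Phi> ^^ n) (symd c u)"
    using flow_critical_chain[OF assms(1)] unfolding u_def
    by (simp add: funpow_Suc_right del: funpow.simps)
  also have "\<dots> = symd ((?\<Phi> ^^ n) c) ((?\<Phi> ^^ n) u)"
    using \<open>c \<subseteq> K\<close> \<open>u \<subseteq> K\<close> by (rule funpow_flow_symd)
  also have "(?\<Phi> ^^ n) u = {}"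
    using u by (rule flow_nilpotent_upper)
  finally show ?thesis
    by simp
qed

lemma flow_stabilizes:
  assumes "c \<subseteq> K" "\<forall>x\<in>c. r x < n"
  shows "(lin flow_cell ^^ Suc n) c = (lin flow_cell ^^ n) c"
  using assms
proof (induction n arbitrary: c)
  case 0
  then show ?case
    by auto
next
  case (Suc n)
  let ?\<Phi> = "lin flow_cell"
  have critical: "(?\<Phi> ^^ Suc (Suc n)) (c \<inter> C) = (?\<Phi> ^^ Suc n) (c \<inter> C)"
    using Suc.prems(2) by (intro flow_critical_stabilizes) auto
  have "r y < n" if "\<nu> \<in> c - C" "y \<in> flow_cell \<nu>" for \<nu> y
    using that Suc.prems flow_cell_regular[of \<nu> y] by fastforce
  then have "\<forall>y\<in>?\<Phi> (c - C). r y < n"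
    using lin_subset_UN[of flow_cell "c - C"] by blast
  moreover have "?\<Phi> (c - C) \<subseteq> K"
    using Suc.prems(1) by (intro flow_subset) blast
  ultimately have "(?\<Phi> ^^ Suc n) (?\<Phi> (c - C)) = (?\<Phi> ^^ n) (?\<Phi> (c - C))"
    using Suc.IH by blast
  then have regular: "(?\<Phi> ^^ Suc (Suc n)) (c - C) = (?\<Phi> ^^ Suc n) (c - C)"
    by (simp only: funpow_Suc_right o_apply)
  have "symd (c \<inter> C) (c - C) = c"
    by auto
  moreover have "c \<inter> C \<subseteq> K" "c - C \<subseteq> K"
    using Suc.prems(1) by auto
  ultimately have "(?\<Phi> ^^ k) c = symd ((?\<Phi> ^^ k) (c \<inter> C)) ((?\<Phi> ^^ k) (c - C))" for k
    using funpow_flow_symd[of "c \<inter> C" "c - C" k] by simp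
  then show ?case
    using critical regular by (simp del: funpow.simps)
qed

lemma flow_eventually_fixed:
  assumes "c \<subseteq> K"
  shows "\<exists>i. (gradient_flow d P ^^ Suc i) c = (gradient_flow d P ^^ i) c"
proof -
  have "\<forall>x\<in>c. r x < Suc (Max (r ` K))"
    using assms finite_K by (simp add: le_imp_less_Suc subset_iff)
  then show ?thesis
    using flow_stabilizes[OF assms] gradient_flow_eq by metis
qed

text \<open>A reference map of the transposed gradient is the coreference map of the flow.\<close>

context
  fixes h :: "'b \<Rightarrow> 'b set"
  assumes coreference: "reference_map K d' (P\<inverse>) C dim h"
begin

lemma coreference_outside: "s \<notin> K \<Longrightarrow> h s = {}"
  and coreference_dim: "s \<in> K \<Longrightarrow> h s \<subseteq> {\<nu> \<in> C. dim \<nu> = dim s}"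
  and coreference_critical: "\<nu> \<in> C \<Longrightarrow> h \<nu> = {\<nu>}"
  and coreference_paired: "\<sigma> \<in> Domain P \<Longrightarrow> h \<sigma> = {} \<and> lin h (d' \<sigma>) = {}"
  using coreference by (auto simp: reference_map_def)

lemma flow_cell_transpose:
  "{\<nu> \<in> K. x \<in> flow_cell \<nu>} =
     symd (symd {\<nu> \<in> K. x = \<nu>} {\<nu> \<in> K. x \<in> lin d (P `` {\<nu>})}) {\<nu> \<in> K. x \<in> P `` d \<nu>}"
proof -
  have mem: "x \<in> flow_cell \<nu> \<longleftrightarrow> ((x = \<nu>) \<noteq> (x \<in> lin d (P `` {\<nu>}))) \<noteq> (x \<in> P `` d \<nu>)" for \<nu>
    by (simp only: flow_cell_def symd_iff singleton_iff)
  show ?thesis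
  proof (rule set_eqI)
    fix \<nu>
    show "\<nu> \<in> {\<nu> \<in> K. x \<in> flow_cell \<nu>} \<longleftrightarrow>
      \<nu> \<in> symd (symd {\<nu> \<in> K. x = \<nu>} {\<nu> \<in> K. x \<in> lin d (P `` {\<nu>})}) {\<nu> \<in> K. x \<in> P `` d \<nu>}"
      unfolding symd_iff mem_Collect_eq mem by (cases "\<nu> \<in> K") simp_all
  qed
qed

lemma lin_coreference_dV: "lin h {\<nu> \<in> K. x \<in> lin d (P `` {\<nu>})} = {}"
proof -
  have "\<nu> \<in> Domain P" if "x \<in> lin d (P `` {\<nu>})" for \<nu>
    using that lin_subset_UN[of d "P `` {\<nu>}"] by blast
  then show ?thesis
    using coreference_paired by (intro lin_zero) blast
qed

lemma lin_coreference_Vd: "lin h {\<nu> \<in> K. x \<in> P `` d \<nu>} = {}"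
proof (cases "x \<in> Range P")
  case True
  then obtain \<sigma> where \<sigma>: "(\<sigma>, x) \<in> P"
    by blast
  have "\<sigma> \<in> K"
    using \<sigma> Domain_subset_K by blast
  have "(t, x) \<in> P \<longleftrightarrow> t = \<sigma>" for t
    using pair_Image_converse[OF \<sigma>] by blast
  then have "\<nu> \<in> {\<nu> \<in> K. x \<in> P `` d \<nu>} \<longleftrightarrow> \<nu> \<in> K \<and> \<sigma> \<in> d \<nu>" for \<nu>
    by (simp add: Image_iff)
  then have "{\<nu> \<in> K. x \<in> P `` d \<nu>} = d' \<sigma>"
    using d'_iff[OF _ \<open>\<sigma> \<in> K\<close>] d'_subset[of \<sigma>] by blast
  moreover have "\<sigma> \<in> Domain P"
    using \<sigma> by blast
  ultimately show ?thesis
    using coreference_paired by simp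
next
  case False
  then have "{\<nu> \<in> K. x \<in> P `` d \<nu>} = {}"
    by blast
  then show ?thesis
    by (simp only: lin_empty)
qed

lemma lin_coreference_singleton: "lin h {\<nu> \<in> K. x = \<nu>} = h x"
proof (cases "x \<in> K")
  case True
  then have "{\<nu> \<in> K. x = \<nu>} = {x}"
    by blast
  then show ?thesis
    by (simp only: lin_singleton)
next
  case False
  then have "{\<nu> \<in> K. x = \<nu>} = {}"
    by blast
  then show ?thesis
    by (simp only: lin_empty coreference_outside[OF False])
qed

lemma coreference_transposed_flow: "lin h {\<nu> \<in> K. x \<in> flow_cell \<nu>} = h x"
proof -
  let ?X = "{\<nu> \<in> K. x = \<nu>}" and ?A = "{\<nu> \<in> K. x \<in> lin d (P `` {\<nu>})}"
    and ?B = "{\<nu> \<in> K. x \<in> P `` d \<nu>}"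
  have "?X \<subseteq> K" "?A \<subseteq> K" "?B \<subseteq> K" "symd ?X ?A \<subseteq> K"
    by auto
  note fin = this[THEN finite_chain]
  have "lin h {\<nu> \<in> K. x \<in> flow_cell \<nu>} = symd (symd (lin h ?X) (lin h ?A)) (lin h ?B)"
    unfolding flow_cell_transpose by (simp only: lin_symd[OF fin(4,3)] lin_symd[OF fin(1,2)])
  also have "\<dots> = h x"
    by (simp only: lin_coreference_singleton lin_coreference_dV lin_coreference_Vd symd_empty_right)
  finally show ?thesis .
qed

lemma flow_extension: "lin flow_cell {\<nu> \<in> K. \<kappa> \<in> h \<nu>} = {\<nu> \<in> K. \<kappa> \<in> h \<nu>}"
proof (rule set_eqI)
  fix x
  have "x \<in> lin flow_cell {\<nu> \<in> K. \<kappa> \<in> h \<nu>} \<longleftrightarrow> \<kappa> \<in> lin h {\<nu> \<in> K. x \<in> flow_cell \<nu>}"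
    by (rule lin_transpose)
  also have "\<dots> \<longleftrightarrow> x \<in> {\<nu> \<in> K. \<kappa> \<in> h \<nu>}"
    using coreference_outside by (auto simp: coreference_transposed_flow)
  finally show "x \<in> lin flow_cell {\<nu> \<in> K. \<kappa> \<in> h \<nu>} \<longleftrightarrow> x \<in> {\<nu> \<in> K. \<kappa> \<in> h \<nu>}" .
qed

lemma lin_extension_critical:
  assumes "\<nu> \<in> C"
  shows "\<nu> \<in> lin (\<lambda>\<kappa>. {\<nu> \<in> K. \<kappa> \<in> h \<nu>}) ks \<longleftrightarrow> \<nu> \<in> ks"
proof -
  have "\<nu> \<in> K"
    using assms C_subset_K by blast
  then have "{\<kappa> \<in> ks. \<nu> \<in> {\<mu> \<in> K. \<kappa> \<in> h \<mu>}} = {\<kappa> \<in> ks. \<kappa> = \<nu>}"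
    by (simp add: coreference_critical[OF assms])
  also have "\<dots> = (if \<nu> \<in> ks then {\<nu>} else {})"
    by auto
  finally show ?thesis
    by (simp add: lin_def)
qed

lemma gradient_flow_lin_extension:
  assumes "finite ks"
  shows "gradient_flow d P (lin (\<lambda>\<kappa>. {\<nu> \<in> K. \<kappa> \<in> h \<nu>}) ks) = lin (\<lambda>\<kappa>. {\<nu> \<in> K. \<kappa> \<in> h \<nu>}) ks"
  using assms finite_K by (simp add: gradient_flow_eq lin_lin flow_extension)

lemma fixed_chain_eq_extension:
  assumes "c \<subseteq> K" "gradient_flow d P c = c"
  shows "c = lin (\<lambda>\<kappa>. {\<nu> \<in> K. \<kappa> \<in> h \<nu>}) (c \<inter> C)"
    (is "c = lin ?E (c \<inter> C)")
proof -
  define e where "e = symd c (lin ?E (c \<inter> C))"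
  have "lin ?E (c \<inter> C) \<subseteq> K"
    using lin_subset_UN[of ?E "c \<inter> C"] by blast
  have "finite (c \<inter> C)"
    using assms(1) by (intro finite_chain) blast
  have "e \<subseteq> K"
    using assms(1) \<open>lin ?E (c \<inter> C) \<subseteq> K\<close> by (auto simp: e_def)
  moreover have "lin flow_cell e = e"
    using lin_symd[OF finite_chain[OF assms(1)] finite_chain[OF \<open>lin ?E (c \<inter> C) \<subseteq> K\<close>], of flow_cell]
      assms(2) gradient_flow_lin_extension[OF \<open>finite (c \<inter> C)\<close>]
    by (simp add: e_def gradient_flow_eq)
  moreover have "\<nu> \<notin> e" if "\<nu> \<in> C" for \<nu>
    using lin_extension_critical[OF that, of "c \<inter> C"] that by (simp add: e_def)
  then have "e \<inter> C = {}"
    by blast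
  ultimately have "e = {}"
    by (rule flow_fixed_chain_without_critical)
  then show ?thesis
    by (simp add: e_def symd_eq_empty_iff)
qed

lemma extension_dim:
  assumes "ks \<subseteq> {s \<in> K. dim s = q}"
  shows "lin (\<lambda>\<kappa>. {\<nu> \<in> K. \<kappa> \<in> h \<nu>}) ks \<subseteq> {s \<in> K. dim s = q}"
proof
  fix y
  assume "y \<in> lin (\<lambda>\<kappa>. {\<nu> \<in> K. \<kappa> \<in> h \<nu>}) ks"
  then obtain \<kappa> where "\<kappa> \<in> ks" "y \<in> K" "\<kappa> \<in> h y"
    using lin_subset_UN[of "\<lambda>\<kappa>. {\<nu> \<in> K. \<kappa> \<in> h \<nu>}" ks] by blast
  then show "y \<in> {s \<in> K. dim s = q}"
    using assms coreference_dim by fastforce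
qed

theorem extension_image_eq_fixed_chains:
  "lin (\<lambda>\<kappa>. {\<nu> \<in> K. \<kappa> \<in> h \<nu>}) ` Pow (C \<inter> {s \<in> K. dim s = q}) =
     {c. c \<subseteq> {s \<in> K. dim s = q} \<and> gradient_flow d P c = c}"
  (is "lin ?E ` ?Ks = ?Fixed")
proof
  show "lin ?E ` ?Ks \<subseteq> ?Fixed"
  proof
    fix c
    assume "c \<in> lin ?E ` ?Ks"
    then obtain ks where ks: "ks \<subseteq> C \<inter> {s \<in> K. dim s = q}" and c: "c = lin ?E ks"
      by blast
    have "finite ks"
      using ks C_subset_K by (intro finite_chain) blast
    have "c \<subseteq> {s \<in> K. dim s = q}"
      unfolding c using ks by (intro extension_dim) blast
    moreover have "gradient_flow d P c = c"
      unfolding c using \<open>finite ks\<close> by (rule gradient_flow_lin_extension)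
    ultimately show "c \<in> ?Fixed"
      by simp
  qed
  show "?Fixed \<subseteq> lin ?E ` ?Ks"
  proof
    fix c
    assume c: "c \<in> ?Fixed"
    then have "c = lin ?E (c \<inter> C)"
      by (intro fixed_chain_eq_extension) auto
    moreover have "c \<inter> C \<in> ?Ks"
      using c by blast
    ultimately show "c \<in> lin ?E ` ?Ks"
      by blast
  qed
qed
end

end

section \<open>Morse sequences\<close>

definition regular_pairs :: "'a step list \<Rightarrow> ('a set \<times> 'a set) set" where
  "regular_pairs W = {(\<sigma>, \<tau>). Expand \<sigma> \<tau> \<in> set W}"

lemma flow_eq_gradient_flow: "flow K W = gradient_flow (bd K) (regular_pairs W)"
proof -
  have "Vf W = (\<lambda>\<sigma>. regular_pairs W `` {\<sigma>})"
    by (auto simp: Vf_def regular_pairs_def)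
  then show ?thesis
    by (simp add: flow_def gradient_flow_def)
qed

lemma coflow_eq_gradient_flow: "coflow K W = gradient_flow (cobd K) ((regular_pairs W)\<inverse>)"
proof -
  have "Vs W = (\<lambda>\<tau>. (regular_pairs W)\<inverse> `` {\<tau>})"
    by (auto simp: Vs_def regular_pairs_def)
  then show ?thesis
    by (simp add: coflow_def gradient_flow_def)
qed

lemma is_ref_map_iff: "is_ref_map K W f \<longleftrightarrow> reference_map K (bd K) (regular_pairs W) (crit W) card f"
proof -
  have "upper_reg W = Range (regular_pairs W)"
    by (auto simp: upper_reg_def regular_pairs_def)
  then show ?thesis
    by (simp add: is_ref_map_def reference_map_def)
qed

lemma is_coref_map_iff:
  "is_coref_map K W f \<longleftrightarrow> reference_map K (cobd K) ((regular_pairs W)\<inverse>) (crit W) card f"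
proof -
  have "lower_reg W = Range ((regular_pairs W)\<inverse>)"
    by (auto simp: lower_reg_def regular_pairs_def)
  then show ?thesis
    by (simp add: is_coref_map_def reference_map_def)
qed

lemma simplicial_complex_face:
  "simplicial_complex K \<Longrightarrow> s \<in> K \<Longrightarrow> t \<subseteq> s \<Longrightarrow> t \<noteq> {} \<Longrightarrow> t \<in> K"
  unfolding simplicial_complex_def by blast

lemma simplicial_complex_simplex: "simplicial_complex K \<Longrightarrow> s \<in> K \<Longrightarrow> finite s \<and> s \<noteq> {}"
  unfolding simplicial_complex_def by blast

lemma free_pair_coface: "free_pair K \<sigma> \<tau> \<Longrightarrow> \<nu> \<in> K \<Longrightarrow> \<sigma> \<subseteq> \<nu> \<Longrightarrow> \<nu> = \<sigma> \<or> \<nu> = \<tau>"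
  unfolding free_pair_def by blast

lemma cplx_iff: "s \<in> cplx W i \<longleftrightarrow> (\<exists>j < min i (length W). s \<in> step_set (W ! j))"
proof
  assume "s \<in> cplx W i"
  then obtain x where "x \<in> set (take i W)" "s \<in> step_set x"
    unfolding cplx_def by blast
  then show "\<exists>j < min i (length W). s \<in> step_set (W ! j)"
    by (auto simp: in_set_conv_nth)
next
  assume "\<exists>j < min i (length W). s \<in> step_set (W ! j)"
  then obtain j where "j < min i (length W)" "s \<in> step_set (W ! j)"
    by blast
  moreover from this(1) have "W ! j \<in> set (take i W)"
    by (metis in_set_conv_nth length_take nth_take min_less_iff_conj)
  ultimately show "s \<in> cplx W i"
    unfolding cplx_def by blast
qed

locale morse_sequence =
  fixes K :: "'a set set" and W :: "'a step list"
  assumes morse_seq: "morse_seq K W"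
begin

lemma K_iff: "s \<in> K \<longleftrightarrow> (\<exists>i < length W. s \<in> step_set (W ! i))"
  using morse_seq by (auto simp: morse_seq_def cplx_iff)

lemma step_simplicial_complex: "i < length W \<Longrightarrow> simplicial_complex (cplx W (Suc i))"
  using morse_seq by (simp add: morse_seq_def)

lemma step_fresh: "i < length W \<Longrightarrow> s \<in> step_set (W ! i) \<Longrightarrow> s \<notin> cplx W i"
  using morse_seq by (cases "W ! i") (auto simp: morse_seq_def)

lemma step_unique:
  assumes "i < length W" "j < length W" "s \<in> step_set (W ! i)" "s \<in> step_set (W ! j)"
  shows "i = j"
proof -
  have "\<not> i < j" if "i < length W" "j < length W" "s \<in> step_set (W ! i)" "s \<in> step_set (W ! j)"
    for i j
  proof
    assume "i < j"
    then have "s \<in> cplx W j"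
      using that(1,3) by (auto simp: cplx_iff)
    then show False
      using step_fresh that(2,4) by blast
  qed
  then show ?thesis
    using assms by (meson linorder_neqE_nat)
qed

definition step_index :: "'a set \<Rightarrow> nat" where
  "step_index s = (THE i. i < length W \<and> s \<in> step_set (W ! i))"

lemma step_index_eqI: "i < length W \<Longrightarrow> s \<in> step_set (W ! i) \<Longrightarrow> step_index s = i"
  unfolding step_index_def by (rule the_equality) (simp, metis step_unique)

lemma step_index:
  assumes "s \<in> K"
  shows "step_index s < length W \<and> s \<in> step_set (W ! step_index s)"
proof -
  obtain i where "i < length W" "s \<in> step_set (W ! i)"
    using assms K_iff by blast
  then show ?thesis
    using step_index_eqI by simp
qed

lemma step_eqI:
  assumes "x \<in> set W" "y \<in> set W" "s \<in> step_set x" "s \<in> step_set y"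
  shows "x = y"
proof -
  obtain i j where "i < length W" "W ! i = x" "j < length W" "W ! j = y"
    using assms(1,2) by (auto simp: in_set_conv_nth)
  then show ?thesis
    using step_unique[of i j s] assms(3,4) by simp
qed

lemma step_subset_K: "x \<in> set W \<Longrightarrow> step_set x \<subseteq> K"
  by (auto simp: K_iff in_set_conv_nth)

lemma face_step_index:
  assumes "s \<in> K" "t \<subseteq> s" "t \<noteq> {}"
  shows "t \<in> K \<and> step_index t \<le> step_index s"
proof -
  let ?i = "step_index s"
  have "s \<in> cplx W (Suc ?i)"
    using step_index[OF assms(1)] by (auto simp: cplx_iff)
  then have "t \<in> cplx W (Suc ?i)"
    using simplicial_complex_face step_simplicial_complex step_index[OF assms(1)] assms(2,3)
    by blast
  then obtain j where "j \<le> ?i" "j < length W" "t \<in> step_set (W ! j)"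
    by (auto simp: cplx_iff less_Suc_eq_le)
  then show ?thesis
    using K_iff step_index_eqI by auto
qed

lemma simplex_nonempty: "s \<in> K \<Longrightarrow> s \<noteq> {}"
proof -
  assume "s \<in> K"
  then have "s \<in> cplx W (Suc (step_index s))"
    using step_index by (auto simp: cplx_iff)
  then show ?thesis
    using simplicial_complex_simplex step_simplicial_complex step_index \<open>s \<in> K\<close> by blast
qed

lemma Expand_in_bd:
  assumes "Expand \<sigma> \<tau> \<in> set W"
  shows "\<sigma> \<in> bd K \<tau>"
proof -
  obtain i where i: "i < length W" "W ! i = Expand \<sigma> \<tau>"
    using assms by (auto simp: in_set_conv_nth)
  let ?C = "cplx W (Suc i)"
  have sc: "simplicial_complex ?C" and fp: "free_pair ?C \<sigma> \<tau>"
    using i morse_seq by (auto simp: morse_seq_def)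
  then have "\<sigma> \<subset> \<tau>" "\<tau> \<in> ?C" "finite \<tau>"
    unfolding free_pair_def simplicial_complex_def by blast+
  then obtain x where x: "x \<in> \<tau>" "x \<notin> \<sigma>"
    by blast
  then have "insert x \<sigma> \<subseteq> \<tau>"
    using \<open>\<sigma> \<subset> \<tau>\<close> by blast
  then have "insert x \<sigma> \<in> ?C"
    using simplicial_complex_face[OF sc \<open>\<tau> \<in> ?C\<close>] by blast
  then have "insert x \<sigma> = \<tau>"
    using free_pair_coface[OF fp] x(2) by blast
  moreover have "finite \<sigma>"
    using \<open>finite \<tau>\<close> \<open>\<sigma> \<subset> \<tau>\<close> finite_subset by blast
  ultimately have "card \<sigma> + 1 = card \<tau>"
    using x(2) by auto
  moreover have "\<sigma> \<in> K"
    using assms step_subset_K by fastforce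
  ultimately show ?thesis
    using \<open>\<sigma> \<subset> \<tau>\<close> by (simp add: bd_def)
qed

lemma face_same_step_index:
  assumes "s \<in> K" "t \<in> bd K s" "step_index t = step_index s"
  shows "Expand t s \<in> set W"
proof -
  have "t \<subset> s" "t \<in> K"
    using assms(2) by (auto simp: bd_def)
  then have ts: "t \<in> step_set (W ! step_index s)" "s \<in> step_set (W ! step_index s)"
    using step_index[OF \<open>t \<in> K\<close>] step_index[OF assms(1)] assms(3) by simp_all
  have step: "W ! step_index s \<in> set W"
    using step_index[OF assms(1)] by simp
  show ?thesis
  proof (cases "W ! step_index s")
    case (Fill \<nu>)
    then show ?thesis
      using ts \<open>t \<subset> s\<close> by simp
  next
    case (Expand \<sigma> \<tau>)
    then have "\<sigma> \<subset> \<tau>"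
      using Expand_in_bd step by (simp add: bd_def)
    then have "t = \<sigma> \<and> s = \<tau>"
      using ts \<open>t \<subset> s\<close> Expand by auto
    then show ?thesis
      using step Expand by simp
  qed
qed

lemma finite_K: "finite K"
proof -
  have fin: "finite (step_set x)" for x
    by (cases x) simp_all
  have "K = (\<Union>x\<in>set W. step_set x)"
    using morse_seq by (simp add: morse_seq_def cplx_def)
  then show ?thesis
    by (simp add: fin)
qed

lemma K_eq_critical_regular: "K = crit W \<union> Domain (regular_pairs W) \<union> Range (regular_pairs W)"
proof
  show "K \<subseteq> crit W \<union> Domain (regular_pairs W) \<union> Range (regular_pairs W)"
  proof
    fix s
    assume "s \<in> K"
    then obtain x where "x \<in> set W" "s \<in> step_set x"
      using step_index nth_mem by blast
    show "s \<in> crit W \<union> Domain (regular_pairs W) \<union> Range (regular_pairs W)"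
    proof (cases x)
      case (Fill \<nu>)
      then show ?thesis
        using \<open>x \<in> set W\<close> \<open>s \<in> step_set x\<close> by (simp add: crit_def)
    next
      case (Expand \<sigma> \<tau>)
      then have "(\<sigma>, \<tau>) \<in> regular_pairs W"
        using \<open>x \<in> set W\<close> by (simp add: regular_pairs_def)
      then show ?thesis
        using \<open>s \<in> step_set x\<close> Expand by auto
    qed
  qed
  show "crit W \<union> Domain (regular_pairs W) \<union> Range (regular_pairs W) \<subseteq> K"
    using step_subset_K by (fastforce simp: crit_def regular_pairs_def)
qed

lemma Expand_psubset: "Expand \<sigma> \<tau> \<in> set W \<Longrightarrow> \<sigma> \<subset> \<tau>"
  using Expand_in_bd by (simp add: bd_def)

lemma step_index_pair: "(\<sigma>, \<tau>) \<in> regular_pairs W \<Longrightarrow> step_index \<sigma> = step_index \<tau>"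
proof -
  assume "(\<sigma>, \<tau>) \<in> regular_pairs W"
  then obtain i where "i < length W" "W ! i = Expand \<sigma> \<tau>"
    by (auto simp: regular_pairs_def in_set_conv_nth)
  then show ?thesis
    using step_index_eqI[of i \<sigma>] step_index_eqI[of i \<tau>] by simp
qed

lemma step_index_bd: "\<nu> \<in> K \<Longrightarrow> t \<in> bd K \<nu> \<Longrightarrow> step_index t \<le> step_index \<nu>"
  using face_step_index simplex_nonempty by (auto simp: bd_def)

lemma single_valued_regular_pairs: "single_valued (regular_pairs W)"
proof (rule single_valuedI)
  fix \<sigma> \<tau> \<tau>'
  assume "(\<sigma>, \<tau>) \<in> regular_pairs W" "(\<sigma>, \<tau>') \<in> regular_pairs W"
  then have "Expand \<sigma> \<tau> = Expand \<sigma> \<tau>'"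
    using step_eqI[of "Expand \<sigma> \<tau>" "Expand \<sigma> \<tau>'" \<sigma>] by (simp add: regular_pairs_def)
  then show "\<tau> = \<tau>'"
    by simp
qed

lemma single_valued_converse_regular_pairs: "single_valued ((regular_pairs W)\<inverse>)"
proof (rule single_valuedI)
  fix \<tau> \<sigma> \<sigma>'
  assume "(\<tau>, \<sigma>) \<in> (regular_pairs W)\<inverse>" "(\<tau>, \<sigma>') \<in> (regular_pairs W)\<inverse>"
  then have "Expand \<sigma> \<tau> = Expand \<sigma>' \<tau>"
    using step_eqI[of "Expand \<sigma> \<tau>" "Expand \<sigma>' \<tau>" \<tau>] by (simp add: regular_pairs_def)
  then show "\<sigma> = \<sigma>'"
    by simp
qed

lemma crit_regular_disjoint:
  "crit W \<inter> Domain (regular_pairs W) = {}" "crit W \<inter> Range (regular_pairs W) = {}"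
proof -
  have False if "Fill s \<in> set W" "Expand \<sigma> \<tau> \<in> set W" "s = \<sigma> \<or> s = \<tau>" for s \<sigma> \<tau>
    using step_eqI[OF that(1,2), of s] that(3) by auto
  then show "crit W \<inter> Domain (regular_pairs W) = {}" "crit W \<inter> Range (regular_pairs W) = {}"
    by (auto simp: crit_def regular_pairs_def)
qed

lemma Domain_Range_regular_pairs_disjoint: "Domain (regular_pairs W) \<inter> Range (regular_pairs W) = {}"
proof -
  have False if "Expand s \<tau> \<in> set W" "Expand \<sigma> s \<in> set W" for s \<sigma> \<tau>
  proof -
    have "Expand s \<tau> = Expand \<sigma> s"
      using step_eqI[OF that, of s] by simp
    then show False
      using Expand_psubset[OF that(1)] by simp
  qed
  then show ?thesis
    by (auto simp: regular_pairs_def)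
qed

sublocale flow: discrete_gradient K "bd K" "cobd K" "regular_pairs W" "crit W" step_index card
proof
  show "(t, \<nu>) \<in> regular_pairs W"
    if "\<nu> \<in> K" "t \<in> bd K \<nu>" "step_index t = step_index \<nu>" for \<nu> t
    using face_same_step_index[OF that] by (simp add: regular_pairs_def)
qed (use finite_K K_eq_critical_regular Expand_in_bd step_index_pair step_index_bd
       single_valued_regular_pairs single_valued_converse_regular_pairs crit_regular_disjoint
       Domain_Range_regular_pairs_disjoint in \<open>auto simp: regular_pairs_def bd_def cobd_def\<close>)

text \<open>Reversing the step index turns the coflow into the flow of the transposed gradient.\<close>

sublocale coflow: discrete_gradient K "cobd K" "bd K" "(regular_pairs W)\<inverse>" "crit W"
  "\<lambda>s. length W - step_index s" card
  using step_index by (intro flow.dual) (simp add: less_imp_le)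

lemma ref_map: "reference_map K (bd K) (regular_pairs W) (crit W) card (ref_map K W)"
  using flow.ex1_reference_map unfolding ref_map_def is_ref_map_iff by (rule theI')

lemma coref_map: "reference_map K (cobd K) ((regular_pairs W)\<inverse>) (crit W) card (coref_map K W)"
  using coflow.ex1_reference_map unfolding coref_map_def is_coref_map_iff by (rule theI')

lemma flow_bar_eq_iff:
  assumes "c \<subseteq> K"
  shows "flow_bar K W c = c \<longleftrightarrow> flow K W c = c"
proof -
  obtain i where "(flow K W ^^ Suc i) c = (flow K W ^^ i) c"
    using flow.flow_eventually_fixed[OF assms] unfolding flow_eq_gradient_flow by blast
  then show ?thesis
    unfolding flow_bar_def by (rule funpow_stabilized_eq_iff)
qed

lemma coflow_bar_eq_iff:
  assumes "c \<subseteq> K"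
  shows "coflow_bar K W c = c \<longleftrightarrow> coflow K W c = c"
proof -
  obtain i where "(coflow K W ^^ Suc i) c = (coflow K W ^^ i) c"
    using coflow.flow_eventually_fixed[OF assms] unfolding coflow_eq_gradient_flow by blast
  then show ?thesis
    unfolding coflow_bar_def by (rule funpow_stabilized_eq_iff)
qed

lemma O_over_eq: "O_over K W p = {c. c \<subseteq> simplices K p \<and> flow_bar K W c = c}"
proof -
  have "O_over K W p = {c. c \<subseteq> simplices K p \<and> flow K W c = c}"
    using flow.extension_image_eq_fixed_chains[OF coref_map, of "Suc p"]
    by (simp add: O_over_def ext_ref_def[abs_def] simplices_def flow_eq_gradient_flow)
  also have "\<dots> = {c. c \<subseteq> simplices K p \<and> flow_bar K W c = c}"
    using flow_bar_eq_iff by (auto simp: simplices_def)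
  finally show ?thesis .
qed

lemma O_under_eq: "O_under K W p = {c. c \<subseteq> simplices K p \<and> coflow_bar K W c = c}"
proof -
  have "O_under K W p = {c. c \<subseteq> simplices K p \<and> coflow K W c = c}"
    using coflow.extension_image_eq_fixed_chains[of "ref_map K W" "Suc p"] ref_map
    by (simp add: O_under_def ext_coref_def[abs_def] simplices_def coflow_eq_gradient_flow)
  also have "\<dots> = {c. c \<subseteq> simplices K p \<and> coflow_bar K W c = c}"
    using coflow_bar_eq_iff by (auto simp: simplices_def)
  finally show ?thesis .
qed

end

theorem corollary2:
  fixes K :: "'a set set" and W :: "'a step list" and p :: nat
  assumes "morse_seq K W"
  shows "O_over K W p = {c. c \<subseteq> simplices K p \<and> flow_bar K W c = c}
       \<and> O_under K W p = {c. c \<subseteq> simplices K p \<and> coflow_bar K W c = c}"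
proof -
  interpret morse_sequence K W
    using assms by (rule morse_sequence.intro)
  show ?thesis
    using O_over_eq O_under_eq by (rule conjI)
qed

end
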